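(* Let $T \in \mathbb{R}^{n_1} \otimes \mathbb{R}^{n_2} \otimes \mathbb{R}^{n_3}$ be a real tensor. Then \[ Q(T) \geq \left\lfloor \sqrt{Q_{\mathbb{C}}(T)} \right\rfloor. \]
   Context: For $r \geq 0$ let $I_r := \sum_{j=1}^r e_j \otimes e_j \otimes e_j \in \mathbb{R}^r\otimes\mathbb{R}^r\otimes\mathbb{R}^r$ (the $r$-th unit tensor; $e_j$ the standard basis vectors). The (real) subrank of $T \in \mathbb{R}^{n_1} \otimes \mathbb{R}^{n_2} \otimes \mathbb{R}^{n_3}$ is $Q(T) := \max\{ r \mid \exists\ \mathbb{R}\text{-linear maps } \varphi_i : \mathbb{R}^{n_i} \to \mathbb{R}^r \text{ with } (\varphi_1 \otimes \varphi_2 \otimes \varphi_3) T = I_r\}$. The complex subrank $Q_{\mathbb{C}}(T)$ of the real tensor $T$ is defined in the same way but allowing $\mathbb{C}$-linear maps $\varphi_i : \mathbb{C}^{n_i} \to \mathbb{C}^r$ (with $T$ viewed in $\mathbb{C}^{n_1}\otimes\mathbb{C}^{n_2}\otimes\mathbb{C}^{n_3}$ and $I_r$ the complex unit tensor). *)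

theory Defs
  imports Complex_Main
begin

text \<open>A tensor in K^n1 (x) K^n2 (x) K^n3 is given by its coordinate array
  T i j k (only indices i < n1, j < n2, k < n3 matter).  A linear map
  K^ni -> K^r is given by its r x ni matrix.\<close>

definition restricts_to_unit ::
  "nat \<Rightarrow> nat \<Rightarrow> nat \<Rightarrow> (nat \<Rightarrow> nat \<Rightarrow> nat \<Rightarrow> 'a::field) \<Rightarrow> nat \<Rightarrow> bool" where
  "restricts_to_unit n1 n2 n3 T r \<longleftrightarrow>
     (\<exists>A B C :: nat \<Rightarrow> nat \<Rightarrow> 'a.
        \<forall>a<r. \<forall>b<r. \<forall>c<r.
          (\<Sum>i<n1. \<Sum>j<n2. \<Sum>k<n3. A a i * B b j * C c k * T i j k)
            = (if a = b \<and> b = c then 1 else 0))"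

definition subrank ::
  "nat \<Rightarrow> nat \<Rightarrow> nat \<Rightarrow> (nat \<Rightarrow> nat \<Rightarrow> nat \<Rightarrow> 'a::field) \<Rightarrow> nat" where
  "subrank n1 n2 n3 T = Max {r. restricts_to_unit n1 n2 n3 T r}"

definition real_subrank ::
  "nat \<Rightarrow> nat \<Rightarrow> nat \<Rightarrow> (nat \<Rightarrow> nat \<Rightarrow> nat \<Rightarrow> real) \<Rightarrow> nat" where
  "real_subrank n1 n2 n3 T = subrank n1 n2 n3 T"

definition complex_subrank ::
  "nat \<Rightarrow> nat \<Rightarrow> nat \<Rightarrow> (nat \<Rightarrow> nat \<Rightarrow> nat \<Rightarrow> real) \<Rightarrow> nat" where
  "complex_subrank n1 n2 n3 T = subrank n1 n2 n3 (\<lambda>i j k. complex_of_real (T i j k))"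

end

theory Submission
  imports Defs "Jordan_Normal_Form.Determinant" "HOL-Computational_Algebra.Polynomial"
    "HOL-Library.Discrete_Functions"
begin

text \<open>Let \<open>A, B, C\<close> restrict the complexified \<open>T\<close> to \<open>I\<^sub>r\<close>, with \<open>s\<^sup>2 \<le> r\<close>.
  Arranging the indices below \<open>s\<^sup>2\<close> in an \<open>s \<times> s\<close> grid and summing the \<open>B\<close>'s along rows
  and the \<open>C\<close>'s along columns gives vectors \<open>y\<^sub>v, z\<^sub>w\<close> with
  \<open>T(A\<^sub>a, y\<^sub>v, z\<^sub>w) = [a = v s + w]\<close>, so the \<open>s\<^sup>2\<close> contractions \<open>T(-, y\<^sub>v, z\<^sub>w)\<close> are
  linearly independent.  Replacing \<open>y, z\<close> by \<open>Re + t Im\<close> for real \<open>t\<close> makes the determinant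
  of this pairing matrix a polynomial in \<open>t\<close> that equals \<open>1\<close> at \<open>t = \<i>\<close>, hence is nonzero at
  some real \<open>t\<close>.  There a family dual to the contractions picks out the diagonal ones
  \<open>T(-, y\<^sub>u, z\<^sub>u)\<close>; its real part, together with the now real \<open>y, z\<close>, restricts \<open>T\<close> to
  \<open>I\<^sub>s\<close>.\<close>

definition trilinear_form ::
  "nat \<Rightarrow> nat \<Rightarrow> nat \<Rightarrow> (nat \<Rightarrow> nat \<Rightarrow> nat \<Rightarrow> 'a::comm_ring_1)
    \<Rightarrow> (nat \<Rightarrow> 'a) \<Rightarrow> (nat \<Rightarrow> 'a) \<Rightarrow> (nat \<Rightarrow> 'a) \<Rightarrow> 'a" where
  "trilinear_form n1 n2 n3 T x y z = (\<Sum>i<n1. \<Sum>j<n2. \<Sum>k<n3. x i * y j * z k * T i j k)"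

lemma restricts_to_unit_iff:
  "restricts_to_unit n1 n2 n3 T r \<longleftrightarrow>
    (\<exists>A B C. \<forall>a<r. \<forall>b<r. \<forall>c<r.
       trilinear_form n1 n2 n3 T (A a) (B b) (C c) = (if a = b \<and> b = c then 1 else 0))"
  unfolding restricts_to_unit_def trilinear_form_def ..

lemma trilinear_form_sum_left:
  "finite S \<Longrightarrow> trilinear_form n1 n2 n3 T (\<lambda>i. \<Sum>a\<in>S. f a * x a i) y z
     = (\<Sum>a\<in>S. f a * trilinear_form n1 n2 n3 T (x a) y z)"
  unfolding trilinear_form_def
  by (simp add: sum_distrib_left sum_distrib_right mult.assoc sum.swap[of _ S])

lemma trilinear_form_sum_middle:
  "finite S \<Longrightarrow> trilinear_form n1 n2 n3 T x (\<lambda>j. \<Sum>b\<in>S. y b j) z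
     = (\<Sum>b\<in>S. trilinear_form n1 n2 n3 T x (y b) z)"
  unfolding trilinear_form_def
  by (simp add: sum_distrib_left sum_distrib_right mult.assoc sum.swap[of _ S])

lemma trilinear_form_sum_right:
  "finite S \<Longrightarrow> trilinear_form n1 n2 n3 T x y (\<lambda>k. \<Sum>c\<in>S. z c k)
     = (\<Sum>c\<in>S. trilinear_form n1 n2 n3 T x y (z c))"
  unfolding trilinear_form_def
  by (simp add: sum_distrib_left sum_distrib_right mult.assoc sum.swap[of _ S])

lemma poly_trilinear_form:
  "poly (trilinear_form n1 n2 n3 T x y z) t =
     trilinear_form n1 n2 n3 (\<lambda>i j k. poly (T i j k) t)
       (\<lambda>i. poly (x i) t) (\<lambda>j. poly (y j) t) (\<lambda>k. poly (z k) t)"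
  unfolding trilinear_form_def by (simp add: poly_sum)

lemma Re_trilinear_form_of_real:
  "Re (trilinear_form n1 n2 n3 (\<lambda>i j k. of_real (T i j k)) x (\<lambda>j. of_real (y j)) (\<lambda>k. of_real (z k)))
     = trilinear_form n1 n2 n3 T (\<lambda>i. Re (x i)) y z"
  unfolding trilinear_form_def by simp

lemma det_zero_row:
  assumes "A \<in> carrier_mat n n" "k < n" "\<And>j. j < n \<Longrightarrow> A $$ (k, j) = 0"
  shows "det A = 0"
proof -
  have "(\<Prod>i = 0..<n. A $$ (i, p i)) = 0" if "p permutes {0..<n}" for p
    using assms that by (intro prod_zero bexI[of _ k]) (auto simp: permutes_in_image)
  then show ?thesis
    using assms(1) by (simp add: det_def')
qed

lemma restricts_to_unit_le_dim:
  fixes T :: "nat \<Rightarrow> nat \<Rightarrow> nat \<Rightarrow> 'a::field"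
  assumes "restricts_to_unit n1 n2 n3 T r"
  shows "r \<le> n1"
proof (rule ccontr)
  assume "\<not> r \<le> n1"
  then have "n1 < r" by simp
  from assms obtain A B C where unit: "\<forall>a<r. \<forall>b<r. \<forall>c<r.
      trilinear_form n1 n2 n3 T (A a) (B b) (C c) = (if a = b \<and> b = c then 1 else 0)"
    unfolding restricts_to_unit_iff by blast
  define M where "M = mat r r (\<lambda>(a, i). if i < n1 then A a i else 0)"
  define N where "N = mat r r (\<lambda>(i, b). if i < n1 then
      (\<Sum>c<r. \<Sum>j<n2. \<Sum>k<n3. B b j * C c k * T i j k) else 0)"
  have M: "M \<in> carrier_mat r r" and N: "N \<in> carrier_mat r r"
    by (simp_all add: M_def N_def)
  have "M * N = 1\<^sub>m r"
  proof (rule eq_matI)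
    fix a b assume "a < dim_row (1\<^sub>m r)" "b < dim_col (1\<^sub>m r)"
    then have ab: "a < r" "b < r" by simp_all
    have "(M * N) $$ (a, b) = (\<Sum>i<r. if i < n1 then
        A a i * (\<Sum>c<r. \<Sum>j<n2. \<Sum>k<n3. B b j * C c k * T i j k) else 0)"
      using ab by (auto simp: M_def N_def scalar_prod_def lessThan_atLeast0 intro!: sum.cong)
    also have "\<dots> = (\<Sum>i<n1. A a i * (\<Sum>c<r. \<Sum>j<n2. \<Sum>k<n3. B b j * C c k * T i j k))"
      using \<open>n1 < r\<close> by (intro sum.mono_neutral_cong_right) auto
    also have "\<dots> = (\<Sum>c<r. trilinear_form n1 n2 n3 T (A a) (B b) (C c))"
      unfolding trilinear_form_def sum_distrib_left
      by (subst sum.swap) (simp add: mult.assoc)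
    also have "\<dots> = 1\<^sub>m r $$ (a, b)"
      using unit ab by simp
    finally show "(M * N) $$ (a, b) = 1\<^sub>m r $$ (a, b)" .
  qed (simp_all add: M_def N_def)
  then have "det M * det N = 1"
    using det_mult[OF M N] by simp
  moreover have "det N = 0"
    using \<open>n1 < r\<close> by (intro det_zero_row[OF N]) (auto simp: N_def)
  ultimately show False by simp
qed

lemma
  fixes T :: "nat \<Rightarrow> nat \<Rightarrow> nat \<Rightarrow> 'a::field"
  shows restricts_to_unit_subrank: "restricts_to_unit n1 n2 n3 T (subrank n1 n2 n3 T)"
    and restricts_to_unit_le_subrank: "restricts_to_unit n1 n2 n3 T r \<Longrightarrow> r \<le> subrank n1 n2 n3 T"
proof -
  let ?R = "{r. restricts_to_unit n1 n2 n3 T r}"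
  have "finite ?R"
    by (rule finite_subset[of _ "{..n1}"]) (auto dest: restricts_to_unit_le_dim)
  moreover have "0 \<in> ?R"
    by (simp add: restricts_to_unit_def)
  ultimately show "restricts_to_unit n1 n2 n3 T (subrank n1 n2 n3 T)"
    and "restricts_to_unit n1 n2 n3 T r \<Longrightarrow> r \<le> subrank n1 n2 n3 T"
    unfolding subrank_def using Max_in[of ?R] by auto
qed

lemma floor_sqrt_of_nat: "\<lfloor>sqrt (real n)\<rfloor> = int (floor_sqrt n)"
proof (rule floor_unique)
  have "real (floor_sqrt n ^ 2) \<le> real n"
    by (simp only: of_nat_le_iff floor_sqrt_power2_le)
  then show "real_of_int (int (floor_sqrt n)) \<le> sqrt (real n)"
    by (simp add: real_le_rsqrt)
  have "real n < real (Suc (floor_sqrt n) ^ 2)"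
    by (simp only: of_nat_less_iff Suc_floor_sqrt_power2_gt)
  then have "real n < (real (floor_sqrt n) + 1) ^ 2"
    by (simp add: add.commute)
  then have "sqrt (real n) < sqrt ((real (floor_sqrt n) + 1) ^ 2)"
    by (simp only: real_sqrt_less_iff)
  then show "sqrt (real n) < real_of_int (int (floor_sqrt n)) + 1"
    by simp
qed

lemma pair_index_less:
  fixes v w s :: nat
  assumes "v < s" "w < s"
  shows "v * s + w < s * s"
proof -
  have "v * s + w < (v + 1) * s"
    using assms by simp
  also have "\<dots> \<le> s * s"
    using assms by (intro mult_right_mono) auto
  finally show ?thesis .
qed

lemma pair_index_eq_iff:
  fixes v v' w w' s :: nat
  assumes "w < s" "w' < s"
  shows "v * s + w = v' * s + w' \<longleftrightarrow> v = v' \<and> w = w'"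
proof
  assume "v * s + w = v' * s + w'"
  then have "(v * s + w) div s = (v' * s + w') div s" "(v * s + w) mod s = (v' * s + w') mod s"
    by simp_all
  then show "v = v' \<and> w = w'"
    using assms by simp
qed simp

lemma trilinear_form_block_sums:
  fixes T :: "nat \<Rightarrow> nat \<Rightarrow> nat \<Rightarrow> 'a::comm_ring_1" and A B C :: "nat \<Rightarrow> nat \<Rightarrow> 'a"
  assumes unit: "\<And>a b c. a < r \<Longrightarrow> b < r \<Longrightarrow> c < r \<Longrightarrow>
      trilinear_form n1 n2 n3 T (A a) (B b) (C c) = (if a = b \<and> b = c then 1 else 0)"
    and "s * s \<le> r" "a < r" "v < s" "w < s"
  shows "trilinear_form n1 n2 n3 T (A a)
      (\<lambda>j. \<Sum>w'<s. B (v * s + w') j) (\<lambda>k. \<Sum>v'<s. C (v' * s + w) k)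
    = (if a = v * s + w then 1 else 0)"
proof -
  have "trilinear_form n1 n2 n3 T (A a)
      (\<lambda>j. \<Sum>w'<s. B (v * s + w') j) (\<lambda>k. \<Sum>v'<s. C (v' * s + w) k)
    = (\<Sum>w'<s. \<Sum>v'<s. trilinear_form n1 n2 n3 T (A a) (B (v * s + w')) (C (v' * s + w)))"
    by (simp add: trilinear_form_sum_middle trilinear_form_sum_right)
  also have "\<dots> = (\<Sum>w'<s. \<Sum>v'<s.
      if v' = v then if w' = w then if a = v * s + w then 1 else 0 else 0 else 0)"
  proof (intro sum.cong refl)
    fix w' v' assume "w' \<in> {..<s}" "v' \<in> {..<s}"
    then have "v * s + w' < r" "v' * s + w < r"
      using assms pair_index_less[of v s w'] pair_index_less[of v' s w] by auto
    then show "trilinear_form n1 n2 n3 T (A a) (B (v * s + w')) (C (v' * s + w))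
        = (if v' = v then if w' = w then if a = v * s + w then 1 else 0 else 0 else 0)"
      using assms \<open>w' \<in> {..<s}\<close> by (auto simp: unit pair_index_eq_iff)
  qed
  also have "\<dots> = (if a = v * s + w then 1 else 0)"
    using assms by simp
  finally show ?thesis .
qed

text \<open>Rows are indexed by pairs \<open>(v, w)\<close> with \<open>v, w < s\<close>, encoded as \<open>v * s + w\<close>.\<close>

definition contraction_mat ::
  "nat \<Rightarrow> nat \<Rightarrow> nat \<Rightarrow> (nat \<Rightarrow> nat \<Rightarrow> nat \<Rightarrow> 'a::comm_ring_1)
    \<Rightarrow> (nat \<Rightarrow> nat \<Rightarrow> 'a) \<Rightarrow> (nat \<Rightarrow> nat \<Rightarrow> 'a) \<Rightarrow> (nat \<Rightarrow> nat \<Rightarrow> 'a) \<Rightarrow> nat \<Rightarrow> 'a mat" where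
  "contraction_mat n1 n2 n3 T A y z s = mat (s * s) (s * s)
     (\<lambda>(p, a). trilinear_form n1 n2 n3 T (A a) (y (p div s)) (z (p mod s)))"

lemma contraction_mat_carrier: "contraction_mat n1 n2 n3 T A y z s \<in> carrier_mat (s * s) (s * s)"
  by (simp add: contraction_mat_def)

lemma contraction_mat_entry:
  assumes "a < s * s" "v < s" "w < s"
  shows "contraction_mat n1 n2 n3 T A y z s $$ (v * s + w, a) = trilinear_form n1 n2 n3 T (A a) (y v) (z w)"
  using assms pair_index_less[of v s w] by (simp add: contraction_mat_def)

lemma diagonal_dual_of_det_contraction_mat:
  fixes T :: "nat \<Rightarrow> nat \<Rightarrow> nat \<Rightarrow> 'a::field"
  assumes "det (contraction_mat n1 n2 n3 T A y z s) \<noteq> 0"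
  obtains X where "\<And>u v w. u < s \<Longrightarrow> v < s \<Longrightarrow> w < s \<Longrightarrow>
    trilinear_form n1 n2 n3 T (X u) (y v) (z w) = (if u = v \<and> v = w then 1 else 0)"
proof -
  let ?N = "contraction_mat n1 n2 n3 T A y z s"
  obtain N' where N': "N' \<in> carrier_mat (s * s) (s * s)" "?N * N' = 1\<^sub>m (s * s)"
    using det_non_zero_imp_unit[OF contraction_mat_carrier assms, of undefined]
    by (auto simp: Units_def ring_mat_def)
  define X where "X u i = (\<Sum>a<s * s. N' $$ (a, u * s + u) * A a i)" for u i
  show ?thesis
  proof (rule that)
    fix u v w assume uvw: "u < s" "v < s" "w < s"
    then have idx: "v * s + w < s * s" "u * s + u < s * s"
      by (simp_all add: pair_index_less)
    have "trilinear_form n1 n2 n3 T (X u) (y v) (z w)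
        = (\<Sum>a<s * s. N' $$ (a, u * s + u) * trilinear_form n1 n2 n3 T (A a) (y v) (z w))"
      unfolding X_def by (simp add: trilinear_form_sum_left)
    also have "\<dots> = (\<Sum>a<s * s. N' $$ (a, u * s + u) * ?N $$ (v * s + w, a))"
      using uvw by (intro sum.cong) (simp_all add: contraction_mat_entry)
    also have "\<dots> = (?N * N') $$ (v * s + w, u * s + u)"
      using idx N'(1)
      by (simp add: contraction_mat_def scalar_prod_def lessThan_atLeast0 mult.commute)
    also have "\<dots> = (if u = v \<and> v = w then 1 else 0)"
      using N'(2) idx uvw pair_index_eq_iff[of w s u v u] by auto
    finally show "trilinear_form n1 n2 n3 T (X u) (y v) (z w) = (if u = v \<and> v = w then 1 else 0)" .
  qed
qed

lemma restricts_to_unit_of_complex_diagonal: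
  fixes T :: "nat \<Rightarrow> nat \<Rightarrow> nat \<Rightarrow> real" and X :: "nat \<Rightarrow> nat \<Rightarrow> complex"
  assumes "\<And>u v w. u < s \<Longrightarrow> v < s \<Longrightarrow> w < s \<Longrightarrow>
    trilinear_form n1 n2 n3 (\<lambda>i j k. of_real (T i j k)) (X u)
      (\<lambda>j. of_real (y v j)) (\<lambda>k. of_real (z w k)) = (if u = v \<and> v = w then 1 else 0)"
  shows "restricts_to_unit n1 n2 n3 T s"
  unfolding restricts_to_unit_iff
proof (rule exI[of _ "\<lambda>u i. Re (X u i)"], rule exI[of _ y], rule exI[of _ z], intro allI impI)
  fix u v w assume "u < s" "v < s" "w < s"
  then show "trilinear_form n1 n2 n3 T (\<lambda>i. Re (X u i)) (y v) (z w) = (if u = v \<and> v = w then 1 else 0)"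
    using assms[of u v w] by (simp flip: Re_trilinear_form_of_real)
qed

lemma det_map_mat_poly: "det (map_mat (\<lambda>q. poly q x) P) = poly (det P) x"
proof -
  interpret comm_ring_hom "\<lambda>q. poly q x"
    by unfold_locales auto
  show ?thesis
    by simp
qed

lemma poly_nonzero_at_some_real:
  fixes p :: "'a::{idom, real_algebra_1} poly"
  assumes "p \<noteq> 0"
  obtains t :: real where "poly p (of_real t) \<noteq> 0"
proof -
  have "\<not> range (of_real :: real \<Rightarrow> 'a) \<subseteq> {x. poly p x = 0}"
  proof
    assume "range (of_real :: real \<Rightarrow> 'a) \<subseteq> {x. poly p x = 0}"
    then have "finite (range (of_real :: real \<Rightarrow> 'a))"
      using poly_roots_finite[OF assms] by (rule finite_subset)
    moreover have "inj (of_real :: real \<Rightarrow> 'a)"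
      by (simp add: inj_def)
    ultimately show False
      using finite_imageD infinite_UNIV_char_0 by blast
  qed
  then show ?thesis
    using that by blast
qed

definition re_im_poly :: "complex \<Rightarrow> complex poly" where
  "re_im_poly c = [:of_real (Re c), of_real (Im c):]"

lemma poly_re_im_poly_ii [simp]: "poly (re_im_poly c) \<i> = c"
  by (simp add: re_im_poly_def complex_eq_iff)

lemma poly_re_im_poly_of_real [simp]: "poly (re_im_poly c) (of_real t) = of_real (Re c + t * Im c)"
  by (simp add: re_im_poly_def)

lemma restricts_to_unit_of_complex:
  fixes T :: "nat \<Rightarrow> nat \<Rightarrow> nat \<Rightarrow> real"
  assumes "restricts_to_unit n1 n2 n3 (\<lambda>i j k. complex_of_real (T i j k)) r" and "s * s \<le> r"
  shows "restricts_to_unit n1 n2 n3 T s"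
proof -
  define TC where "TC = (\<lambda>i j k. complex_of_real (T i j k))"
  obtain A B C :: "nat \<Rightarrow> nat \<Rightarrow> complex" where unit: "\<And>a b c. a < r \<Longrightarrow> b < r \<Longrightarrow> c < r \<Longrightarrow>
      trilinear_form n1 n2 n3 TC (A a) (B b) (C c) = (if a = b \<and> b = c then 1 else 0)"
    using assms(1) unfolding restricts_to_unit_iff TC_def by blast
  define y where "y v j = (\<Sum>w<s. B (v * s + w) j)" for v j
  define z where "z w k = (\<Sum>v<s. C (v * s + w) k)" for w k
  define P where "P = contraction_mat n1 n2 n3 (\<lambda>i j k. [:TC i j k:]) (\<lambda>a i. [:A a i:])
    (\<lambda>v j. re_im_poly (y v j)) (\<lambda>w k. re_im_poly (z w k)) s"
  have eval: "map_mat (\<lambda>q. poly q x) P = contraction_mat n1 n2 n3 TC A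
      (\<lambda>v j. poly (re_im_poly (y v j)) x) (\<lambda>w k. poly (re_im_poly (z w k)) x) s" for x
    by (rule eq_matI) (auto simp: P_def contraction_mat_def poly_trilinear_form)
  have "contraction_mat n1 n2 n3 TC A y z s = 1\<^sub>m (s * s)"
  proof (rule eq_matI)
    fix p a assume "p < dim_row (1\<^sub>m (s * s))" "a < dim_col (1\<^sub>m (s * s))"
    then have pa: "p < s * s" "a < s * s" by simp_all
    then have "0 < s"
      by (cases s) simp_all
    then have "p div s < s" "p mod s < s"
      using pa by (simp_all add: less_mult_imp_div_less)
    then show "contraction_mat n1 n2 n3 TC A y z s $$ (p, a) = 1\<^sub>m (s * s) $$ (p, a)"
      using pa assms(2) trilinear_form_block_sums[OF unit assms(2), of a "p div s" "p mod s"]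
      unfolding y_def z_def by (auto simp: contraction_mat_def)
  qed (simp_all add: contraction_mat_def)
  then have "poly (det P) \<i> \<noteq> 0"
    using eval[of \<i>] by (simp flip: det_map_mat_poly)
  then have "det P \<noteq> 0"
    by auto
  then obtain t where "poly (det P) (of_real t) \<noteq> 0"
    by (rule poly_nonzero_at_some_real)
  then have "det (contraction_mat n1 n2 n3 TC A
      (\<lambda>v j. of_real (Re (y v j) + t * Im (y v j))) (\<lambda>w k. of_real (Re (z w k) + t * Im (z w k))) s) \<noteq> 0"
    using eval[of "of_real t"] by (simp flip: det_map_mat_poly)
  then obtain X where "\<And>u v w. u < s \<Longrightarrow> v < s \<Longrightarrow> w < s \<Longrightarrow>
      trilinear_form n1 n2 n3 TC (X u) (\<lambda>j. of_real (Re (y v j) + t * Im (y v j)))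
        (\<lambda>k. of_real (Re (z w k) + t * Im (z w k))) = (if u = v \<and> v = w then 1 else 0)"
    by (rule diagonal_dual_of_det_contraction_mat) blast
  then show ?thesis
    unfolding TC_def by (rule restricts_to_unit_of_complex_diagonal)
qed

theorem theorem2p2:
  fixes n1 n2 n3 :: nat and T :: "nat \<Rightarrow> nat \<Rightarrow> nat \<Rightarrow> real"
  shows "int (real_subrank n1 n2 n3 T) \<ge> \<lfloor>sqrt (real (complex_subrank n1 n2 n3 T))\<rfloor>"
proof -
  let ?r = "complex_subrank n1 n2 n3 T"
  have "restricts_to_unit n1 n2 n3 (\<lambda>i j k. complex_of_real (T i j k)) ?r"
    unfolding complex_subrank_def by (rule restricts_to_unit_subrank)
  moreover have "floor_sqrt ?r * floor_sqrt ?r \<le> ?r"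
    using floor_sqrt_power2_le[of ?r] by (simp add: power2_eq_square)
  ultimately have "restricts_to_unit n1 n2 n3 T (floor_sqrt ?r)"
    by (rule restricts_to_unit_of_complex)
  then have "floor_sqrt ?r \<le> real_subrank n1 n2 n3 T"
    unfolding real_subrank_def by (rule restricts_to_unit_le_subrank)
  then show ?thesis
    by (simp add: floor_sqrt_of_nat)
qed

end
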